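(* In the multi-hop VAoI network described in the context, for each $i\in\{1,\dots,N\}$ the VAoI at node $i+1$ satisfies \[ \Delta_{i+1}(t)=\Delta_i(t-m_i)+\eta_{m_i}, \] where $m_i$ (the number of slots back to the last successful delivery on link $i$, so that $V_{i+1}(t)=V_i(t-m_i)$) is a geometric random variable with parameter $\rho_i$, $\mathbb{P}(m_i=\ell)=(1-\rho_i)^{\ell-1}\rho_i$ for $\ell=1,2,\dots$, and $\eta_k=V_S(t)-V_S(t-k)$ (the number of source versions generated in the last $k$ slots) is, for given $k$, a binomial random variable with parameters $k$ and $p_g$: $\mathbb{P}(\eta_k=r\mid k)=\binom{k}{r}p_g^r(1-p_g)^{k-r}$, $r=0,\dots,k$.
   Context: Time is slotted. A source generates a new version in each slot independently with probability $p_g$, and its version index $V_S(t)$ increases by one at the start of the slot following each generation. Nodes $0,1,\dots,N+1$ form a line; node $0$ always holds the current source version ($V_0(t)=V_S(t)$), node $N+1$ is the destination, and nodes $1,\dots,N$ are relays. Each node stores only the latest version it has received. Link $i$ (from node $i$ to node $i+1$) delivers a transmission successfully with probability $\rho_i$, independently across slots and links ($\rho_0=p_s$). Node $0$ transmits according to an update policy; each relay node $i\ge1$ transmits its stored version in every slot, so that $V_{i+1}(t+1)=V_i(t)$ if the transmission on link $i$ at slot $t$ succeeds and $V_{i+1}(t+1)=V_{i+1}(t)$ otherwise. The VAoI at node $j$ is $\Delta_j(t)=V_S(t)-V_j(t)$. *)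

theory Defs
  imports "HOL-Probability.Probability"
begin

text \<open>Sample-path model. g t: a new version is generated in slot t.
  sl i t: transmission on link i in slot t would succeed (link i from node i to i+1).
  u t: node 0 (the source side) transmits in slot t (arbitrary update policy).\<close>

definition VS :: "(nat \<Rightarrow> bool) \<Rightarrow> nat \<Rightarrow> nat" where
  "VS g t = card {s. s < t \<and> g s}"

fun Vn :: "(nat \<Rightarrow> bool) \<Rightarrow> (nat \<Rightarrow> nat \<Rightarrow> bool) \<Rightarrow> (nat \<Rightarrow> bool) \<Rightarrow> nat \<Rightarrow> nat \<Rightarrow> nat" where
  "Vn g sl u 0 t = VS g t"
| "Vn g sl u (Suc j) 0 = 0"
| "Vn g sl u (Suc j) (Suc t) =
     (if (j = 0 \<longrightarrow> u t) \<and> sl j t then Vn g sl u j t else Vn g sl u (Suc j) t)"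

definition VAoI :: "(nat \<Rightarrow> bool) \<Rightarrow> (nat \<Rightarrow> nat \<Rightarrow> bool) \<Rightarrow> (nat \<Rightarrow> bool) \<Rightarrow> nat \<Rightarrow> nat \<Rightarrow> int" where
  "VAoI g sl u j t = int (VS g t) - int (Vn g sl u j t)"

definition lastm :: "(nat \<Rightarrow> nat \<Rightarrow> bool) \<Rightarrow> nat \<Rightarrow> nat \<Rightarrow> nat" where
  "lastm sl i t = (LEAST l. 1 \<le> l \<and> l \<le> t \<and> sl i (t - l))"

definition eta :: "(nat \<Rightarrow> bool) \<Rightarrow> nat \<Rightarrow> nat \<Rightarrow> int" where
  "eta g t k = int (VS g t) - int (VS g (t - k))"

end

theory Submission
  imports Defs
begin

text \<open>Relay i transmits in every slot, so at time t node i+1 holds what node i held at the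
  last slot t - m before t in which link i succeeded, and the VAoI gap between the two nodes
  is the number of versions generated in those m slots. The event m = l is the pattern
  "success at t - l, failure in the l - 1 slots after it" of independent link outcomes, hence
  has probability (1 - \<rho>) ^ (l - 1) * \<rho>. The event that r versions are generated in the k
  slots before t is the disjoint union, over the r-subsets of these slots, of patterns of
  independent generation outcomes; as these are independent of the link outcomes, the
  binomial law also holds jointly with the event m = k.\<close>

lemma lastm_spec:
  assumes "\<exists>s<t. sl i s"
  shows "1 \<le> lastm sl i t" "lastm sl i t \<le> t" "sl i (t - lastm sl i t)"
    and "\<And>s. t - lastm sl i t < s \<Longrightarrow> s < t \<Longrightarrow> \<not> sl i s"
proof -
  let ?P = "\<lambda>l. 1 \<le> l \<and> l \<le> t \<and> sl i (t - l)"
  obtain s where "s < t" "sl i s" using assms by blast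
  then have "?P (t - s)" by auto
  then have P: "?P (lastm sl i t)" unfolding lastm_def by (rule LeastI)
  then show "1 \<le> lastm sl i t" "lastm sl i t \<le> t" "sl i (t - lastm sl i t)" by auto
  fix s assume s: "t - lastm sl i t < s" "s < t"
  show "\<not> sl i s"
  proof
    assume "sl i s"
    with s have "?P (t - s)" by auto
    then have "lastm sl i t \<le> t - s" unfolding lastm_def by (rule Least_le)
    with s P show False by linarith
  qed
qed

lemma lastm_eq_iff:
  assumes "1 \<le> l" "l \<le> t"
  shows "(\<exists>s<t. sl i s) \<and> lastm sl i t = l
    \<longleftrightarrow> (\<forall>s\<in>{t-l..<t}. sl i s \<longleftrightarrow> s = t - l)"
proof
  assume "(\<exists>s<t. sl i s) \<and> lastm sl i t = l"
  then have "sl i (t - l)" "\<And>s. t - l < s \<Longrightarrow> s < t \<Longrightarrow> \<not> sl i s"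
    using lastm_spec[of t sl i] by auto
  then show "\<forall>s\<in>{t-l..<t}. sl i s \<longleftrightarrow> s = t - l"
    by (metis atLeastLessThan_iff le_neq_implies_less)
next
  assume pattern: "\<forall>s\<in>{t-l..<t}. sl i s \<longleftrightarrow> s = t - l"
  then have success: "sl i (t - l)" using assms by auto
  have "lastm sl i t = l" unfolding lastm_def
  proof (rule Least_equality)
    show "1 \<le> l \<and> l \<le> t \<and> sl i (t - l)" using assms success by simp
    fix l' assume "1 \<le> l' \<and> l' \<le> t \<and> sl i (t - l')"
    with pattern assms show "l \<le> l'" by (cases "l \<le> l'") auto
  qed
  moreover have "t - l < t" using assms by simp
  ultimately show "(\<exists>s<t. sl i s) \<and> lastm sl i t = l" using success by blast
qed

lemma Vn_Suc_eq_last_success: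
  assumes "1 \<le> i" "sl i s" "s < t" "\<And>s'. s < s' \<Longrightarrow> s' < t \<Longrightarrow> \<not> sl i s'"
  shows "Vn g sl u (Suc i) t = Vn g sl u i s"
proof -
  have "Vn g sl u (Suc i) t' = Vn g sl u i s" if "Suc s \<le> t'" "t' \<le> t" for t'
    using that
  proof (induction t' rule: dec_induct)
    case base
    then show ?case using assms(1,2) by simp
  next
    case (step n)
    then show ?case using assms(4) by simp
  qed
  then show ?thesis using assms(3) by simp
qed

lemma Vn_Suc_eq_at_lastm:
  assumes "1 \<le> i" "\<exists>s<t. sl i s"
  shows "Vn g sl u (Suc i) t = Vn g sl u i (t - lastm sl i t)"
  using lastm_spec[of t sl i, OF assms(2)] assms(1)
  by (intro Vn_Suc_eq_last_success) auto

lemma VAoI_eq_plus_eta: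
  assumes "Vn g sl u j t = Vn g sl u i (t - l)"
  shows "VAoI g sl u j t = VAoI g sl u i (t - l) + eta g t l"
  using assms unfolding VAoI_def eta_def by simp

lemma eta_eq_card:
  assumes "k \<le> t"
  shows "eta g t k = int (card {s\<in>{t-k..<t}. g s})"
proof -
  have "{s. s < t \<and> g s} = {s. s < t - k \<and> g s} \<union> {s\<in>{t-k..<t}. g s}" by auto
  moreover have "card ({s. s < t - k \<and> g s} \<union> {s\<in>{t-k..<t}. g s})
      = card {s. s < t - k \<and> g s} + card {s\<in>{t-k..<t}. g s}"
    by (rule card_Un_disjoint) auto
  ultimately show ?thesis unfolding eta_def VS_def by simp
qed

lemma (in prob_space) indep_var_eq_in_events:
  assumes "indep_vars (\<lambda>_. count_space UNIV) X I" "j \<in> I"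
  shows "{\<omega>\<in>space M. X j \<omega> = b} \<in> events"
proof -
  have "X j \<in> measurable M (count_space UNIV)"
    using assms unfolding indep_vars_def2 by auto
  then have "X j -` {b} \<inter> space M \<in> events" by (rule measurable_sets) auto
  moreover have "X j -` {b} \<inter> space M = {\<omega>\<in>space M. X j \<omega> = b}" by auto
  ultimately show ?thesis by simp
qed

lemma (in prob_space) prob_indep_var_not:
  assumes "indep_vars (\<lambda>_. count_space UNIV) X I" "j \<in> I"
  shows "prob {\<omega>\<in>space M. \<not> X j \<omega>} = 1 - prob {\<omega>\<in>space M. X j \<omega>}"
proof -
  have "{\<omega>\<in>space M. \<not> X j \<omega>} = space M - {\<omega>\<in>space M. X j \<omega> = True}" by auto
  then show ?thesis using prob_compl[OF indep_var_eq_in_events[OF assms, of True]] by simp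
qed

lemma (in prob_space) prob_indep_vars_pattern:
  assumes "indep_vars (\<lambda>_. count_space UNIV) X I" "finite J" "J \<subseteq> I"
  shows "prob {\<omega>\<in>space M. \<forall>j\<in>J. X j \<omega> = f j}
    = (\<Prod>j\<in>J. prob {\<omega>\<in>space M. X j \<omega> = f j})"
proof (cases "J = {}")
  case False
  have "indep_sets (\<lambda>i. {X i -` A \<inter> space M | A. A \<in> sets (count_space UNIV)}) I"
    using assms(1) unfolding indep_vars_def2 by auto
  then have "prob (\<Inter>j\<in>J. X j -` {f j} \<inter> space M) = (\<Prod>j\<in>J. prob (X j -` {f j} \<inter> space M))"
    by (rule indep_setsD[OF _ assms(3) False assms(2)]) auto
  moreover have "(\<Inter>j\<in>J. X j -` {f j} \<inter> space M) = {\<omega>\<in>space M. \<forall>j\<in>J. X j \<omega> = f j}"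
    using False by auto
  moreover have "X j -` {f j} \<inter> space M = {\<omega>\<in>space M. X j \<omega> = f j}" for j by auto
  ultimately show ?thesis by simp
qed (simp add: prob_space)

lemma (in prob_space) prob_indep_vars_pattern_subset:
  assumes ind: "indep_vars (\<lambda>_. count_space UNIV) X I"
    and "finite D" "D \<subseteq> I" "finite J" "J \<subseteq> I" "D \<inter> J = {}" "A \<subseteq> D"
    and p: "\<And>j. j \<in> D \<Longrightarrow> prob {\<omega>\<in>space M. X j \<omega>} = p"
  shows "prob {\<omega>\<in>space M. (\<forall>j\<in>J. X j \<omega> = f j) \<and> (\<forall>j\<in>D. X j \<omega> \<longleftrightarrow> j \<in> A)}
    = p ^ card A * (1 - p) ^ (card D - card A) * prob {\<omega>\<in>space M. \<forall>j\<in>J. X j \<omega> = f j}"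
    (is "prob ?event = ?c * prob ?pattern")
proof -
  define h where "h j = (if j \<in> D then j \<in> A else f j)" for j
  let ?P = "\<lambda>j. prob {\<omega>\<in>space M. X j \<omega> = h j}"
  have "?event = {\<omega>\<in>space M. \<forall>j\<in>J \<union> D. X j \<omega> = h j}"
    using assms(6) unfolding h_def by auto
  also have "prob \<dots> = (\<Prod>j\<in>J \<union> D. ?P j)"
    using assms(2-5) by (intro prob_indep_vars_pattern[OF ind]) auto
  also have "\<dots> = (\<Prod>j\<in>J. ?P j) * (\<Prod>j\<in>D. ?P j)"
    using assms(2,4,6) by (intro prod.union_disjoint) auto
  also have "(\<Prod>j\<in>J. ?P j) = prob ?pattern"
    using prob_indep_vars_pattern[OF ind assms(4,5)] assms(6) unfolding h_def
    by (auto intro!: prod.cong)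
  also have "(\<Prod>j\<in>D. ?P j) = (\<Prod>j\<in>D. if j \<in> A then p else 1 - p)"
    using assms(3) p prob_indep_var_not[OF ind] unfolding h_def by (intro prod.cong) auto
  also have "\<dots> = ?c"
    using assms(2,7)
    by (simp add: prod.If_cases Int_absorb1 Diff_eq[symmetric] card_Diff_subset finite_subset)
  finally show ?thesis by simp
qed

lemma (in prob_space) prob_indep_vars_pattern_count:
  assumes ind: "indep_vars (\<lambda>_. count_space UNIV) X I"
    and "finite D" "D \<subseteq> I" "finite J" "J \<subseteq> I" "D \<inter> J = {}"
    and p: "\<And>j. j \<in> D \<Longrightarrow> prob {\<omega>\<in>space M. X j \<omega>} = p"
  shows "prob {\<omega>\<in>space M. (\<forall>j\<in>J. X j \<omega> = f j) \<and> card {j\<in>D. X j \<omega>} = r}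
    = real (card D choose r) * p ^ r * (1 - p) ^ (card D - r) * prob {\<omega>\<in>space M. \<forall>j\<in>J. X j \<omega> = f j}"
    (is "prob ?event = _ * prob ?pattern")
proof -
  define E where "E A = {\<omega>\<in>space M. (\<forall>j\<in>J. X j \<omega> = f j) \<and> (\<forall>j\<in>D. X j \<omega> \<longleftrightarrow> j \<in> A)}" for A
  let ?subsets = "{A. A \<subseteq> D \<and> card A = r}"
  have E_determines: "A = {j\<in>D. X j \<omega>}" if "A \<subseteq> D" "\<omega> \<in> E A" for A \<omega>
    using that unfolding E_def by auto
  have "?event = (\<Union>A\<in>?subsets. E A)"
  proof (intro set_eqI iffI)
    fix \<omega> assume "\<omega> \<in> ?event"
    then show "\<omega> \<in> (\<Union>A\<in>?subsets. E A)"
      unfolding E_def by (intro UN_I[of "{j\<in>D. X j \<omega>}"]) auto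
  next
    fix \<omega> assume "\<omega> \<in> (\<Union>A\<in>?subsets. E A)"
    then obtain A where "A \<in> ?subsets" "\<omega> \<in> E A" by blast
    with E_determines[of A \<omega>] show "\<omega> \<in> ?event"
      unfolding E_def by auto
  qed
  also have "prob \<dots> = (\<Sum>A\<in>?subsets. prob (E A))"
  proof (rule finite_measure_finite_Union)
    show "finite ?subsets" using assms(2) by auto
    have "E A \<in> events" for A
      unfolding E_def using indep_var_eq_in_events[OF ind] assms(2-5)
      by (intro sets.sets_Collect_conj sets.sets_Collect_finite_All) auto
    then show "E ` ?subsets \<subseteq> events" by blast
    show "disjoint_family_on E ?subsets"
      unfolding disjoint_family_on_def using E_determines by blast
  qed
  also have "\<dots> = (\<Sum>A\<in>?subsets. p ^ r * (1 - p) ^ (card D - r) * prob ?pattern)"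
    unfolding E_def using prob_indep_vars_pattern_subset[OF ind assms(2-6) _ p] by simp
  also have "\<dots> = real (card D choose r) * p ^ r * (1 - p) ^ (card D - r) * prob ?pattern"
    using n_subsets[OF assms(2)] by simp
  finally show ?thesis .
qed

lemma (in prob_space) prob_indep_vars_subset:
  assumes "indep_vars (\<lambda>_. count_space UNIV) X I" "finite D" "D \<subseteq> I" "A \<subseteq> D"
    and "\<And>j. j \<in> D \<Longrightarrow> prob {\<omega>\<in>space M. X j \<omega>} = p"
  shows "prob {\<omega>\<in>space M. \<forall>j\<in>D. X j \<omega> \<longleftrightarrow> j \<in> A}
    = p ^ card A * (1 - p) ^ (card D - card A)"
  using prob_indep_vars_pattern_subset[OF assms(1-3), of "{}"] assms(4,5) by (simp add: prob_space)

lemma (in prob_space) prob_indep_vars_count: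
  assumes "indep_vars (\<lambda>_. count_space UNIV) X I" "finite D" "D \<subseteq> I"
    and "\<And>j. j \<in> D \<Longrightarrow> prob {\<omega>\<in>space M. X j \<omega>} = p"
  shows "prob {\<omega>\<in>space M. card {j\<in>D. X j \<omega>} = r}
    = real (card D choose r) * p ^ r * (1 - p) ^ (card D - r)"
  using prob_indep_vars_pattern_count[OF assms(1-3), of "{}"] assms(4) by (simp add: prob_space)

locale vaoi_outcomes = prob_space M for M :: "'a measure" +
  fixes pg :: real and \<rho> :: "nat \<Rightarrow> real"
    and G :: "nat \<Rightarrow> 'a \<Rightarrow> bool" and S :: "nat \<Rightarrow> nat \<Rightarrow> 'a \<Rightarrow> bool"
  assumes indep_outcomes: "indep_vars (\<lambda>_. count_space UNIV) (case_sum G (case_prod S)) UNIV"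
    and prob_generation: "\<And>t. prob {\<omega>\<in>space M. G t \<omega>} = pg"
    and prob_link_success: "\<And>i t. prob {\<omega>\<in>space M. S i t \<omega>} = \<rho> i"
begin

abbreviation outcome :: "nat + nat \<times> nat \<Rightarrow> 'a \<Rightarrow> bool" where
  "outcome \<equiv> case_sum G (case_prod S)"

definition link_slots :: "nat \<Rightarrow> nat \<Rightarrow> nat \<Rightarrow> (nat + nat \<times> nat) set" where
  "link_slots i a b = (\<lambda>s. Inr (i, s)) ` {a..<b}"

definition generation_slots :: "nat \<Rightarrow> nat \<Rightarrow> (nat + nat \<times> nat) set" where
  "generation_slots a b = Inl ` {a..<b}"

lemma card_link_slots: "card (link_slots i a b) = b - a"
  unfolding link_slots_def by (subst card_image) (auto simp: inj_on_def)

lemma card_generation_slots: "card (generation_slots a b) = b - a"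
  unfolding generation_slots_def by (simp add: card_image)

lemma lastm_event_iff:
  assumes "1 \<le> l" "l \<le> t"
  shows "(\<exists>s<t. S i s \<omega>) \<and> lastm (\<lambda>j s. S j s \<omega>) i t = l
    \<longleftrightarrow> (\<forall>j\<in>link_slots i (t - l) t. outcome j \<omega> \<longleftrightarrow> j \<in> {Inr (i, t - l)})"
  using lastm_eq_iff[OF assms, of "\<lambda>j s. S j s \<omega>" i] unfolding link_slots_def by auto

lemma eta_event_iff:
  assumes "k \<le> t"
  shows "eta (\<lambda>s. G s \<omega>) t k = int r \<longleftrightarrow> card {j\<in>generation_slots (t - k) t. outcome j \<omega>} = r"
proof -
  have "{j\<in>generation_slots (t - k) t. outcome j \<omega>} = Inl ` {s\<in>{t-k..<t}. G s \<omega>}"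
    unfolding generation_slots_def by auto
  then show ?thesis using eta_eq_card[OF assms] by (simp add: card_image)
qed

lemma prob_lastm_eq:
  assumes "1 \<le> l" "l \<le> t"
  shows "prob {\<omega>\<in>space M. (\<exists>s<t. S i s \<omega>) \<and> lastm (\<lambda>j s. S j s \<omega>) i t = l}
    = (1 - \<rho> i) ^ (l - 1) * \<rho> i"
proof -
  let ?L = "link_slots i (t - l) t" and ?last = "Inr (i, t - l) :: nat + nat \<times> nat"
  have "{\<omega>\<in>space M. (\<exists>s<t. S i s \<omega>) \<and> lastm (\<lambda>j s. S j s \<omega>) i t = l}
      = {\<omega>\<in>space M. \<forall>j\<in>?L. outcome j \<omega> \<longleftrightarrow> j \<in> {?last}}"
    using lastm_event_iff[OF assms] by blast
  also have "prob \<dots> = \<rho> i ^ card {?last} * (1 - \<rho> i) ^ (card ?L - card {?last})"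
    using assms by (intro prob_indep_vars_subset[OF indep_outcomes])
      (auto simp: link_slots_def prob_link_success)
  finally show ?thesis
    using assms by (simp add: card_link_slots mult.commute)
qed

lemma prob_eta_eq:
  assumes "k \<le> t"
  shows "prob {\<omega>\<in>space M. eta (\<lambda>s. G s \<omega>) t k = int r}
    = real (k choose r) * pg ^ r * (1 - pg) ^ (k - r)"
proof -
  let ?W = "generation_slots (t - k) t"
  have "{\<omega>\<in>space M. eta (\<lambda>s. G s \<omega>) t k = int r}
      = {\<omega>\<in>space M. card {j\<in>?W. outcome j \<omega>} = r}"
    using eta_event_iff[OF assms] by blast
  also have "prob \<dots> = real (card ?W choose r) * pg ^ r * (1 - pg) ^ (card ?W - r)"
    by (intro prob_indep_vars_count[OF indep_outcomes])
      (auto simp: generation_slots_def prob_generation)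
  finally show ?thesis
    using assms by (simp add: card_generation_slots)
qed

lemma prob_lastm_eta_eq:
  assumes "1 \<le> k" "k \<le> t"
  shows "prob {\<omega>\<in>space M. (\<exists>s<t. S i s \<omega>) \<and> lastm (\<lambda>j s. S j s \<omega>) i t = k
      \<and> eta (\<lambda>s. G s \<omega>) t k = int r}
    = real (k choose r) * pg ^ r * (1 - pg) ^ (k - r)
      * prob {\<omega>\<in>space M. (\<exists>s<t. S i s \<omega>) \<and> lastm (\<lambda>j s. S j s \<omega>) i t = k}"
proof -
  let ?L = "link_slots i (t - k) t" and ?W = "generation_slots (t - k) t"
  let ?last = "\<lambda>j. j \<in> {Inr (i, t - k)}"
  have "prob {\<omega>\<in>space M. (\<forall>j\<in>?L. outcome j \<omega> = ?last j) \<and> card {j\<in>?W. outcome j \<omega>} = r}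
      = real (card ?W choose r) * pg ^ r * (1 - pg) ^ (card ?W - r)
        * prob {\<omega>\<in>space M. \<forall>j\<in>?L. outcome j \<omega> = ?last j}"
    by (intro prob_indep_vars_pattern_count[OF indep_outcomes])
      (auto simp: generation_slots_def link_slots_def prob_generation)
  then show ?thesis
    using assms card_generation_slots[of "t - k" t]
    by (simp only: conj_assoc[symmetric] lastm_event_iff[OF assms] eta_event_iff[OF assms(2)])
      simp
qed

end

theorem proposition4:
  fixes M :: "'a measure" and pg :: real and \<rho> :: "nat \<Rightarrow> real" and N :: nat
    and G :: "nat \<Rightarrow> 'a \<Rightarrow> bool" and S :: "nat \<Rightarrow> nat \<Rightarrow> 'a \<Rightarrow> bool"
    and U :: "nat \<Rightarrow> 'a \<Rightarrow> bool"
  assumes "prob_space M"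
    and indep: "prob_space.indep_vars M (\<lambda>_. count_space UNIV) (case_sum G (case_prod S)) UNIV"
    and genG: "\<And>t. measure M {\<omega> \<in> space M. G t \<omega>} = pg"
    and linkS: "\<And>i t. measure M {\<omega> \<in> space M. S i t \<omega>} = \<rho> i"
    and i: "1 \<le> i" "i \<le> N"
  shows
    "(\<forall>\<omega>\<in>space M. \<forall>t. (\<exists>s<t. S i s \<omega>) \<longrightarrow>
        Vn (\<lambda>s. G s \<omega>) (\<lambda>j s. S j s \<omega>) (\<lambda>s. U s \<omega>) (Suc i) t
          = Vn (\<lambda>s. G s \<omega>) (\<lambda>j s. S j s \<omega>) (\<lambda>s. U s \<omega>) i (t - lastm (\<lambda>j s. S j s \<omega>) i t)
      \<and> VAoI (\<lambda>s. G s \<omega>) (\<lambda>j s. S j s \<omega>) (\<lambda>s. U s \<omega>) (Suc i) t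
          = VAoI (\<lambda>s. G s \<omega>) (\<lambda>j s. S j s \<omega>) (\<lambda>s. U s \<omega>) i (t - lastm (\<lambda>j s. S j s \<omega>) i t)
            + eta (\<lambda>s. G s \<omega>) t (lastm (\<lambda>j s. S j s \<omega>) i t))
   \<and> (\<forall>t l. 1 \<le> l \<and> l \<le> t \<longrightarrow>
        measure M {\<omega> \<in> space M. (\<exists>s<t. S i s \<omega>) \<and> lastm (\<lambda>j s. S j s \<omega>) i t = l}
          = (1 - \<rho> i) ^ (l - 1) * \<rho> i)
   \<and> (\<forall>t k r. 1 \<le> k \<and> k \<le> t \<and> r \<le> k \<longrightarrow>
        measure M {\<omega> \<in> space M. (\<exists>s<t. S i s \<omega>) \<and> lastm (\<lambda>j s. S j s \<omega>) i t = k
                      \<and> eta (\<lambda>s. G s \<omega>) t k = int r}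
          = real (k choose r) * pg ^ r * (1 - pg) ^ (k - r)
            * measure M {\<omega> \<in> space M. (\<exists>s<t. S i s \<omega>) \<and> lastm (\<lambda>j s. S j s \<omega>) i t = k})
   \<and> (\<forall>t k r. k \<le> t \<and> r \<le> k \<longrightarrow>
        measure M {\<omega> \<in> space M. eta (\<lambda>s. G s \<omega>) t k = int r}
          = real (k choose r) * pg ^ r * (1 - pg) ^ (k - r))"
proof -
  interpret vaoi_outcomes M pg \<rho> G S
    using assms(1) indep genG linkS by (simp add: vaoi_outcomes_def vaoi_outcomes_axioms_def)
  show ?thesis
    using i(1)
    by (simp add: Vn_Suc_eq_at_lastm VAoI_eq_plus_eta[OF Vn_Suc_eq_at_lastm]
        prob_lastm_eq prob_lastm_eta_eq prob_eta_eq)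
qed

end
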